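(* Let $R$ be a commutative ring with ${\rm char}(R)=3$, $G$ a group with involution $\varphi$, and assume $(RG)^-_\varphi$ is commutative. Let $g,h\in G\setminus G_\varphi$ be non-commuting elements. Consider the conditions: (C1) $gh\in G_\varphi$, $hg\in G_\varphi$, $h\varphi(g)=g\varphi(h)$ and $\varphi(h)g=\varphi(g)h$; (C2) $gh\in G_\varphi$, $hg\in G_\varphi$, $h\varphi(g)=\varphi(g)h$; (C3) $gh\in G_\varphi$, $hg=\varphi(g)h=g\varphi(h)$; (C4) $gh=h\varphi(g)=\varphi(g)\varphi(h)$ and $\varphi(h)g=\varphi(g)h$; (C5) $gh=\varphi(h)g=\varphi(g)\varphi(h)$ and $h\varphi(g)=g\varphi(h)$; (C6) $hg\in G_\varphi$, $gh=\varphi(h)g=h\varphi(g)$. \begin{enumerate} \item If $g,h$ satisfy (C1) or (C2), then $g^3\notin G_\varphi$ and $h^3\notin G_\varphi$. \item If $g,h$ satisfy one of (C3)–(C6), then $g^3,h^3\in G_\varphi$ and $g^3,h^3$ lie in the center of $\langle g,h,\varphi(g),\varphi(h)\rangle$. \end{enumerate}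
   Context: An involution on a group $G$ is a map $\varphi:G\to G$ with $\varphi(gh)=\varphi(h)\varphi(g)$ and $\varphi^2=\mathrm{id}$, extended $R$-linearly to $RG$. $G_\varphi=\{g\in G\mid\varphi(g)=g\}$; $(RG)^-_\varphi=\{\alpha\in RG\mid\varphi(\alpha)=-\alpha\}$. *)

theory Defs
  imports "HOL-Algebra.Algebra"
begin

definition group_involution :: "('g, 'b) monoid_scheme \<Rightarrow> ('g \<Rightarrow> 'g) \<Rightarrow> bool" where
  "group_involution G \<phi> \<longleftrightarrow>
     \<phi> \<in> carrier G \<rightarrow> carrier G \<and>
     (\<forall>x\<in>carrier G. \<forall>y\<in>carrier G. \<phi> (x \<otimes>\<^bsub>G\<^esub> y) = \<phi> y \<otimes>\<^bsub>G\<^esub> \<phi> x) \<and>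
     (\<forall>x\<in>carrier G. \<phi> (\<phi> x) = x)"

definition fixed_elems :: "('g, 'b) monoid_scheme \<Rightarrow> ('g \<Rightarrow> 'g) \<Rightarrow> 'g set" where
  "fixed_elems G \<phi> = {x \<in> carrier G. \<phi> x = x}"

definition group_ring :: "('g, 'b) monoid_scheme \<Rightarrow> ('g \<Rightarrow> 'r::comm_ring_1) set" where
  "group_ring G = {a. finite {x. a x \<noteq> 0} \<and> (\<forall>x. x \<notin> carrier G \<longrightarrow> a x = 0)}"

definition gr_mult :: "('g, 'b) monoid_scheme \<Rightarrow> ('g \<Rightarrow> 'r::comm_ring_1) \<Rightarrow> ('g \<Rightarrow> 'r) \<Rightarrow> ('g \<Rightarrow> 'r)" where
  "gr_mult G a b = (\<lambda>x. if x \<in> carrier G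
      then (\<Sum>y\<in>{y. a y \<noteq> 0}. a y * b (inv\<^bsub>G\<^esub> y \<otimes>\<^bsub>G\<^esub> x)) else 0)"

text \<open>R-linear extension of phi to RG: phi(sum a_g g) = sum a_g phi(g), i.e. coefficient at x is a(phi x).\<close>
definition gr_ext :: "('g, 'b) monoid_scheme \<Rightarrow> ('g \<Rightarrow> 'g) \<Rightarrow> ('g \<Rightarrow> 'r::comm_ring_1) \<Rightarrow> ('g \<Rightarrow> 'r)" where
  "gr_ext G \<phi> a = (\<lambda>x. if x \<in> carrier G then a (\<phi> x) else 0)"

definition gr_skew :: "('g, 'b) monoid_scheme \<Rightarrow> ('g \<Rightarrow> 'g) \<Rightarrow> ('g \<Rightarrow> 'r::comm_ring_1) set" where
  "gr_skew G \<phi> = {a \<in> group_ring G. gr_ext G \<phi> a = - a}"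

definition skew_commutative :: "('g, 'b) monoid_scheme \<Rightarrow> ('g \<Rightarrow> 'g) \<Rightarrow> 'r::comm_ring_1 itself \<Rightarrow> bool" where
  "skew_commutative G \<phi> _ \<longleftrightarrow>
     (\<forall>a\<in>(gr_skew G \<phi> :: ('g \<Rightarrow> 'r) set). \<forall>b\<in>gr_skew G \<phi>. gr_mult G a b = gr_mult G b a)"

end

theory Submission
  imports Defs "HOL-Library.Multiset"
begin

(* For c in G the element c - phi(c) lies in (RG)^-_phi.  Expanding the commutation of a - phi(a)
   and b - phi(b) and comparing coefficients in characteristic 3 gives a "balance condition":
   the multisets [ab, phi(a)phi(b), b phi(a), phi(b)a] and [ba, phi(b)phi(a), a phi(b), phi(a)b]
   have the same multiplicity modulo 3 at every group element.

   Part 1.  Under (C1) or (C2) the balance condition forces phi(g)^2 = g^2 (and likewise for h).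
   As phi(g) <> g and a^2 = b^2, a^3 = b^3 imply a = b, the cube g^3 cannot be fixed.

   Part 2.  Under each of (C3)-(C6) we find d with d^3 = 1, commuting with g and h, such that
   hg = dgh and phi(g), phi(h) arise from g, h by multiplication with d or d^-1 (g, h are
   "twisted by d").  Then h g^n = d^n g^n h, so g^3 and h^3 commute with g, h, d and hence with
   the subgroup they generate, which contains phi(g) and phi(h); and both cubes are fixed since
   (d^(+-1) a)^3 = a^3.  Cases (C4) and (C5) need only the group axioms, (C3) also uses the
   balance condition, and (C6) is (C3) with g and h exchanged. *)

lemma of_nat_eq_imp_mod_CHAR:
  assumes "(of_nat m :: 'r::comm_ring_1) = of_nat n"
  shows "m mod CHAR('r) = n mod CHAR('r)"
proof -
  have "(of_nat (m - n) :: 'r) = 0" "(of_nat (n - m) :: 'r) = 0"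
    using assms by (cases "n \<le> m"; simp add: of_nat_diff)+
  then have "CHAR('r) dvd m - n" "CHAR('r) dvd n - m"
    by (simp_all add: of_nat_eq_0_iff_char_dvd)
  then show ?thesis
    by (metis mod_eq_dvd_iff_nat nat_le_linear)
qed

context group
begin

lemma inv_cancel_left [simp]: "x \<in> carrier G \<Longrightarrow> y \<in> carrier G \<Longrightarrow> inv x \<otimes> (x \<otimes> y) = y"
  by (simp flip: m_assoc)

lemma inv_cancel_left' [simp]: "x \<in> carrier G \<Longrightarrow> y \<in> carrier G \<Longrightarrow> x \<otimes> (inv x \<otimes> y) = y"
  by (simp flip: m_assoc)

lemma mult_assoc_subst:
  "a \<otimes> b = c \<Longrightarrow> a \<in> carrier G \<Longrightarrow> b \<in> carrier G \<Longrightarrow> w \<in> carrier G \<Longrightarrow>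
   a \<otimes> (b \<otimes> w) = c \<otimes> w"
  by (simp flip: m_assoc)

lemma commutes_inv:
  "a \<in> carrier G \<Longrightarrow> b \<in> carrier G \<Longrightarrow> a \<otimes> b = b \<otimes> a \<Longrightarrow> a \<otimes> inv b = inv b \<otimes> a"
  by (metis inv_solve_left' inv_solve_right' m_closed inv_closed m_assoc)

lemma commutes_mult:
  "c \<in> carrier G \<Longrightarrow> a \<in> carrier G \<Longrightarrow> b \<in> carrier G \<Longrightarrow>
   c \<otimes> a = a \<otimes> c \<Longrightarrow> c \<otimes> b = b \<otimes> c \<Longrightarrow> c \<otimes> (a \<otimes> b) = (a \<otimes> b) \<otimes> c"
  by (metis m_assoc)

lemma commutes_generate:
  assumes c: "c \<in> carrier G" and S: "S \<subseteq> carrier G"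
    and comm: "\<And>s. s \<in> S \<Longrightarrow> c \<otimes> s = s \<otimes> c"
    and w: "w \<in> generate G S"
  shows "c \<otimes> w = w \<otimes> c"
  using w
proof (induction w rule: generate.induct)
  case (inv s)
  then show ?case using c S comm commutes_inv by blast
next
  case (eng w1 w2)
  then show ?case using c commutes_mult generate_in_carrier[OF S] by blast
qed (use c comm in auto)

lemma eq_if_pow_Suc_eq:
  assumes "a \<in> carrier G" "b \<in> carrier G"
    and "a [^] n = b [^] (n::nat)" and "a [^] Suc n = b [^] Suc n"
  shows "a = b"
  using assms by simp

lemma pow_mult_root_of_unity:
  assumes "e \<in> carrier G" "a \<in> carrier G" "e \<otimes> a = a \<otimes> e" "e [^] (n::nat) = \<one>"
  shows "(e \<otimes> a) [^] n = a [^] n"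
  using assms by (simp add: pow_mult_distrib)

lemma twisted_pow:
  fixes n :: nat
  assumes d: "d \<in> carrier G" and g: "g \<in> carrier G" and h: "h \<in> carrier G"
    and dg: "d \<otimes> g = g \<otimes> d" and dh: "d \<otimes> h = h \<otimes> d" and hg: "h \<otimes> g = d \<otimes> g \<otimes> h"
  shows "h \<otimes> g [^] n = d [^] n \<otimes> g [^] n \<otimes> h"
    and "h [^] n \<otimes> g = d [^] n \<otimes> g \<otimes> h [^] n"
proof (induction n)
  case (Suc n)
  have "h \<otimes> g [^] Suc n = (h \<otimes> g [^] n) \<otimes> g"
    using g h by (simp add: m_assoc)
  also have "\<dots> = d [^] n \<otimes> g [^] n \<otimes> (h \<otimes> g)"
    using Suc.IH(1) d g h by (simp add: m_assoc)
  also have "\<dots> = d [^] n \<otimes> (g [^] n \<otimes> d) \<otimes> g \<otimes> h"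
    using hg d g h by (simp add: m_assoc)
  also have "\<dots> = d [^] Suc n \<otimes> g [^] Suc n \<otimes> h"
    using d g h group_commutes_pow[OF dg[symmetric] g d, of n] by (simp add: m_assoc)
  finally show "h \<otimes> g [^] Suc n = d [^] Suc n \<otimes> g [^] Suc n \<otimes> h" .
  have "h [^] Suc n \<otimes> g = h \<otimes> (h [^] n \<otimes> g)"
    using g h by (metis m_assoc nat_pow_Suc2 nat_pow_closed)
  also have "\<dots> = d [^] n \<otimes> (h \<otimes> g) \<otimes> h [^] n"
    using Suc.IH(2) d g h group_commutes_pow[OF dh d h, of n]
    by (metis m_assoc m_closed nat_pow_closed)
  also have "\<dots> = d [^] Suc n \<otimes> g \<otimes> h [^] Suc n"
    using hg d g h nat_pow_Suc2[OF h, of n] by (simp add: m_assoc)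
  finally show "h [^] Suc n \<otimes> g = d [^] Suc n \<otimes> g \<otimes> h [^] Suc n" .
qed (use g h in simp_all)

end

locale invol_group = group G for G (structure) +
  fixes \<phi> :: "'a \<Rightarrow> 'a"
  assumes invol: "group_involution G \<phi>"
begin

lemma phi_closed [simp]: "x \<in> carrier G \<Longrightarrow> \<phi> x \<in> carrier G"
  using invol unfolding group_involution_def by blast

lemma phi_mult: "x \<in> carrier G \<Longrightarrow> y \<in> carrier G \<Longrightarrow> \<phi> (x \<otimes> y) = \<phi> y \<otimes> \<phi> x"
  using invol unfolding group_involution_def by blast

lemma phi_phi [simp]: "x \<in> carrier G \<Longrightarrow> \<phi> (\<phi> x) = x"
  using invol unfolding group_involution_def by blast

lemma phi_inj: "x \<in> carrier G \<Longrightarrow> y \<in> carrier G \<Longrightarrow> \<phi> x = \<phi> y \<longleftrightarrow> x = y"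
  by (metis phi_phi)

lemma phi_one [simp]: "\<phi> \<one> = \<one>"
  using phi_mult[of \<one> \<one>] by simp

lemma phi_inv: "x \<in> carrier G \<Longrightarrow> \<phi> (inv x) = inv (\<phi> x)"
  using phi_mult[of x "inv x"] by (simp add: inv_equality)

lemma phi_pow: "x \<in> carrier G \<Longrightarrow> \<phi> (x [^] (n::nat)) = \<phi> x [^] n"
proof (induction n)
  case (Suc n)
  then show ?case by (simp add: phi_mult) (metis nat_pow_Suc nat_pow_Suc2 phi_closed)
qed simp

lemma cube_not_fixed:
  assumes a: "a \<in> carrier G" and na: "\<phi> a \<noteq> a" and sq: "\<phi> a \<otimes> \<phi> a = a \<otimes> a"
  shows "\<phi> (a [^] (3::nat)) \<noteq> a [^] (3::nat)"
proof
  assume "\<phi> (a [^] (3::nat)) = a [^] (3::nat)"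
  then have "\<phi> a [^] Suc 2 = a [^] Suc 2"
    by (metis phi_pow[OF a] numeral_3_eq_3 numeral_2_eq_2)
  moreover have "\<phi> a [^] (2::nat) = a [^] (2::nat)"
    using sq a by (simp add: numeral_2_eq_2)
  ultimately show False
    using eq_if_pow_Suc_eq[of "\<phi> a" a 2] a na by simp
qed

end

definition skew_basis :: "('g \<Rightarrow> 'g) \<Rightarrow> 'g \<Rightarrow> 'g \<Rightarrow> 'r::comm_ring_1" where
  "skew_basis \<phi> c = (\<lambda>w. of_bool (w = c) - of_bool (w = \<phi> c))"

lemma of_nat_count4:
  "of_nat (count {#p, q, r, s#} z) =
     of_bool (p = z) + of_bool (q = z) + of_bool (r = z) + (of_bool (s = z) :: 'r::comm_semiring_1)"
  by simp

context invol_group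
begin

lemma skew_basis_skew:
  assumes "c \<in> carrier G"
  shows "skew_basis \<phi> c \<in> gr_skew G \<phi>"
proof -
  have "{w. skew_basis \<phi> c w \<noteq> 0} \<subseteq> {c, \<phi> c}"
    by (auto simp: skew_basis_def)
  then have "skew_basis \<phi> c \<in> group_ring G"
    using assms by (auto simp: group_ring_def skew_basis_def intro: finite_subset)
  moreover have "gr_ext G \<phi> (skew_basis \<phi> c) = - skew_basis \<phi> c"
  proof
    fix w
    show "gr_ext G \<phi> (skew_basis \<phi> c) w = (- skew_basis \<phi> c) w"
      using assms by (cases "w \<in> carrier G") (auto simp: gr_ext_def skew_basis_def phi_inj)
  qed
  ultimately show ?thesis
    by (simp add: gr_skew_def)
qed

lemma gr_mult_skew_basis:
  assumes c: "c \<in> carrier G" and d: "d \<in> carrier G" and z: "z \<in> carrier G"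
  shows "gr_mult G (skew_basis \<phi> c) (skew_basis \<phi> d) z =
      of_bool (c \<otimes> d = z) - of_bool (c \<otimes> \<phi> d = z)
      - of_bool (\<phi> c \<otimes> d = z) + (of_bool (\<phi> c \<otimes> \<phi> d = z) :: 'r::comm_ring_1)"
proof -
  let ?s = "skew_basis \<phi> :: 'a \<Rightarrow> 'a \<Rightarrow> 'r"
  have solve: "inv e \<otimes> z = f \<longleftrightarrow> e \<otimes> f = z" if "e \<in> carrier G" "f \<in> carrier G" for e f
    using inv_solve_left'[OF that(2) that(1) z] by auto
  have "gr_mult G (?s c) (?s d) z = (\<Sum>y | ?s c y \<noteq> 0. ?s c y * ?s d (inv y \<otimes> z))"
    using z by (simp add: gr_mult_def)
  also have "\<dots> = (\<Sum>y\<in>{c, \<phi> c}. ?s c y * ?s d (inv y \<otimes> z))"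
    by (rule sum.mono_neutral_left) (auto simp: skew_basis_def)
  also have "\<dots> = ?s d (inv c \<otimes> z) - ?s d (inv (\<phi> c) \<otimes> z)"
    by (cases "\<phi> c = c") (simp_all add: skew_basis_def)
  also have "\<dots> = of_bool (c \<otimes> d = z) - of_bool (c \<otimes> \<phi> d = z)
      - of_bool (\<phi> c \<otimes> d = z) + of_bool (\<phi> c \<otimes> \<phi> d = z)"
    using c d by (simp add: skew_basis_def solve)
  finally show ?thesis .
qed

text \<open>The balance condition: commutativity of (RG)^-_phi in characteristic 3 compares the
  multiplicities, modulo 3, of the products occurring in (a - phi(a))(b - phi(b)) and
  (b - phi(b))(a - phi(a)).\<close>
lemma skew_commutative_count:
  assumes comm: "skew_commutative G \<phi> TYPE('r::comm_ring_1)" and char: "CHAR('r) = 3"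
    and a: "a \<in> carrier G" and b: "b \<in> carrier G" and z: "z \<in> carrier G"
  shows "count {#a \<otimes> b, \<phi> a \<otimes> \<phi> b, b \<otimes> \<phi> a, \<phi> b \<otimes> a#} z mod 3
       = count {#b \<otimes> a, \<phi> b \<otimes> \<phi> a, a \<otimes> \<phi> b, \<phi> a \<otimes> b#} z mod 3"
proof -
  let ?s = "skew_basis \<phi> :: 'a \<Rightarrow> 'a \<Rightarrow> 'r"
  have "gr_mult G (?s a) (?s b) z = gr_mult G (?s b) (?s a) z"
    using comm skew_basis_skew[OF a] skew_basis_skew[OF b]
    unfolding skew_commutative_def by metis
  then have "of_bool (a \<otimes> b = z) - of_bool (a \<otimes> \<phi> b = z) - of_bool (\<phi> a \<otimes> b = z)
      + of_bool (\<phi> a \<otimes> \<phi> b = z) = of_bool (b \<otimes> a = z) - of_bool (b \<otimes> \<phi> a = z)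
      - of_bool (\<phi> b \<otimes> a = z) + (of_bool (\<phi> b \<otimes> \<phi> a = z) :: 'r)"
    using a b z by (simp only: gr_mult_skew_basis)
  then have "(of_nat (count {#a \<otimes> b, \<phi> a \<otimes> \<phi> b, b \<otimes> \<phi> a, \<phi> b \<otimes> a#} z) :: 'r)
      = of_nat (count {#b \<otimes> a, \<phi> b \<otimes> \<phi> a, a \<otimes> \<phi> b, \<phi> a \<otimes> b#} z)"
    unfolding of_nat_count4 by (simp only: algebra_simps)
  then show ?thesis
    using of_nat_eq_imp_mod_CHAR char by metis
qed

end

context invol_group
begin

definition twisted_by :: "'a \<Rightarrow> 'a \<Rightarrow> 'a \<Rightarrow> bool" where
  "twisted_by d g h \<longleftrightarrow> d \<in> carrier G \<and> d \<otimes> g = g \<otimes> d \<and> d \<otimes> h = h \<otimes> d \<and>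
     d [^] (3::nat) = \<one> \<and> h \<otimes> g = d \<otimes> g \<otimes> h \<and>
     \<phi> g \<in> {d \<otimes> g, inv d \<otimes> g} \<and> \<phi> h \<in> {d \<otimes> h, inv d \<otimes> h}"

lemma twisted_by_swap:
  assumes g: "g \<in> carrier G" and h: "h \<in> carrier G" and tw: "twisted_by d g h"
  shows "twisted_by (inv d) h g"
proof -
  have d: "d \<in> carrier G" and dg: "d \<otimes> g = g \<otimes> d" and dh: "d \<otimes> h = h \<otimes> d"
    and d3: "d [^] (3::nat) = \<one>" and hg: "h \<otimes> g = d \<otimes> g \<otimes> h"
    using tw by (auto simp: twisted_by_def)
  have "inv d \<otimes> h \<otimes> g = g \<otimes> h"
    using hg d g h by (simp add: m_assoc)
  moreover have "inv d [^] (3::nat) = \<one>"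
    using d d3 by (simp add: nat_pow_inv)
  ultimately show ?thesis
    using tw d g h commutes_inv[OF g d dg[symmetric]] commutes_inv[OF h d dh[symmetric]]
    by (auto simp: twisted_by_def)
qed

lemma twisted_by_cubes:
  assumes g: "g \<in> carrier G" and h: "h \<in> carrier G" and tw: "twisted_by d g h"
  shows "\<phi> (g [^] (3::nat)) = g [^] (3::nat)" and "\<phi> (h [^] (3::nat)) = h [^] (3::nat)"
    and "\<And>w. w \<in> generate G {g, h, \<phi> g, \<phi> h} \<Longrightarrow>
           g [^] (3::nat) \<otimes> w = w \<otimes> g [^] (3::nat) \<and> h [^] (3::nat) \<otimes> w = w \<otimes> h [^] (3::nat)"
proof -
  have d: "d \<in> carrier G" and dg: "d \<otimes> g = g \<otimes> d" and dh: "d \<otimes> h = h \<otimes> d"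
    and d3: "d [^] (3::nat) = \<one>" and hg: "h \<otimes> g = d \<otimes> g \<otimes> h"
    and phi_g: "\<phi> g \<in> {d \<otimes> g, inv d \<otimes> g}" and phi_h: "\<phi> h \<in> {d \<otimes> h, inv d \<otimes> h}"
    using tw by (auto simp: twisted_by_def)
  have shift: "(e \<otimes> a) [^] (3::nat) = a [^] (3::nat)"
    if "e \<in> {d, inv d}" "a \<in> {g, h}" for e a
  proof (rule pow_mult_root_of_unity)
    show "e \<otimes> a = a \<otimes> e"
      using that d g h dg dh commutes_inv[OF g d dg[symmetric]] commutes_inv[OF h d dh[symmetric]]
      by auto
    show "e [^] (3::nat) = \<one>"
      using that d d3 by (auto simp: nat_pow_inv)
  qed (use that d g h in auto)
  show "\<phi> (g [^] (3::nat)) = g [^] (3::nat)" "\<phi> (h [^] (3::nat)) = h [^] (3::nat)"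
    using phi_g phi_h shift g h by (auto simp: phi_pow)
  \<comment> \<open>both cubes commute with g, h and d, hence with the subgroup they generate,
    which contains phi(g) and phi(h)\<close>
  have "generate G {g, h, \<phi> g, \<phi> h} \<subseteq> generate G {g, h, d}"
  proof (rule generate_subgroup_incl)
    have "e \<otimes> a \<in> generate G {g, h, d}" if "e \<in> {d, inv d}" "a \<in> {g, h}" for e a
      using that by (auto intro: generate.intros)
    then show "{g, h, \<phi> g, \<phi> h} \<subseteq> generate G {g, h, d}"
      using phi_g phi_h by (auto intro: generate.incl)
    show "subgroup (generate G {g, h, d}) G"
      using d g h by (intro generate_is_subgroup) auto
  qed
  moreover have "c \<otimes> w = w \<otimes> c" if "c \<in> {g [^] (3::nat), h [^] (3::nat)}"
    and "w \<in> generate G {g, h, d}" for c w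
  proof (rule commutes_generate[OF _ _ _ that(2)])
    have d_cube: "d [^] (3::nat) \<otimes> a = a" if "a \<in> carrier G" for a
      using d3 that by simp
    show "c \<otimes> s = s \<otimes> c" if "s \<in> {g, h, d}" for s
      using that \<open>c \<in> _\<close> twisted_pow[OF d g h dg dh hg, of 3] d g h
        group_commutes_pow[OF dg[symmetric] g d] group_commutes_pow[OF dh[symmetric] h d]
        nat_pow_comm[OF g, of 3 1] nat_pow_comm[OF h, of 3 1]
      by (auto simp: d_cube)
  qed (use that d g h in auto)
  ultimately show "g [^] (3::nat) \<otimes> w = w \<otimes> g [^] (3::nat) \<and> h [^] (3::nat) \<otimes> w = w \<otimes> h [^] (3::nat)"
    if "w \<in> generate G {g, h, \<phi> g, \<phi> h}" for w
    using that by blast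
qed

lemma twisted_C4:
  assumes g: "g \<in> carrier G" and h: "h \<in> carrier G"
    and c1: "g \<otimes> h = h \<otimes> \<phi> g" and c2: "h \<otimes> \<phi> g = \<phi> g \<otimes> \<phi> h"
    and c3: "\<phi> h \<otimes> g = \<phi> g \<otimes> h"
  shows "twisted_by (g \<otimes> inv (\<phi> g)) g h"
proof -
  define x y where "x = \<phi> g" and "y = \<phi> h"
  define d where "d = g \<otimes> inv x"
  have x: "x \<in> carrier G" and y: "y \<in> carrier G" and d: "d \<in> carrier G"
    using g h by (auto simp: x_def y_def d_def)
  have gh: "g \<otimes> h = h \<otimes> x" and hx: "h \<otimes> x = x \<otimes> y" and yg: "y \<otimes> g = x \<otimes> h"
    using c1 c2 c3 by (simp_all add: x_def y_def)
  have gy: "g \<otimes> y = h \<otimes> g"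
    using arg_cong[OF hx, of \<phi>] g h by (simp add: phi_mult x_def y_def)
  have yx: "y \<otimes> x = g \<otimes> y"
    using arg_cong[OF gh, of \<phi>] g h by (simp add: phi_mult x_def y_def)
  have dx_g: "d \<otimes> x = g"
    using g x by (simp add: d_def m_assoc)
  have dh: "d \<otimes> h = h \<otimes> d"
  proof -
    have "d \<otimes> h \<otimes> x = h \<otimes> d \<otimes> x"
      using hx gy d h x y by (simp add: m_assoc dx_g mult_assoc_subst[OF dx_g])
    then show ?thesis using d h x by simp
  qed
  have y_hd: "y = h \<otimes> d"
  proof -
    have "y \<otimes> x = h \<otimes> d \<otimes> x"
      using yx gy dx_g d h x by (simp add: m_assoc)
    then show ?thesis using d h x y by simp
  qed
  have dx: "d \<otimes> x = x \<otimes> d"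
  proof -
    have "d \<otimes> x \<otimes> h = x \<otimes> d \<otimes> h"
      using gh hx y_hd dh dx_g d h x by (simp add: m_assoc)
    then show ?thesis using d h x by simp
  qed
  have dg: "d \<otimes> g = g \<otimes> d"
  proof -
    have "d \<otimes> g = d \<otimes> (x \<otimes> d)"
      using dx by (simp flip: dx_g)
    also have "\<dots> = g \<otimes> d"
      using d x by (simp add: dx_g flip: m_assoc)
    finally show ?thesis .
  qed
  have hg: "h \<otimes> g = d \<otimes> g \<otimes> h"
  proof -
    have "h \<otimes> g = d \<otimes> (h \<otimes> x)"
      using d h x by (simp add: m_assoc mult_assoc_subst[OF dh[symmetric]] flip: dx_g)
    then show ?thesis
      using d g h by (simp add: m_assoc flip: gh)
  qed
  have d3: "d [^] (3::nat) = \<one>"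
  proof -
    have "x \<otimes> h = d \<otimes> d \<otimes> (h \<otimes> x)"
      using y_hd d h x by (simp add: m_assoc mult_assoc_subst[OF dh[symmetric]] flip: yg dx_g)
    also have "\<dots> = d [^] (3::nat) \<otimes> (x \<otimes> h)"
      using hx y_hd d h x
      by (simp add: numeral_3_eq_3 m_assoc dh[symmetric] dx[symmetric]
          mult_assoc_subst[OF dh[symmetric]] mult_assoc_subst[OF dx[symmetric]])
    finally show ?thesis using d h x by simp
  qed
  have "x = inv d \<otimes> g"
    using dx_g d x by (metis inv_cancel_left)
  then show ?thesis
    unfolding twisted_by_def d_def[symmetric] x_def[symmetric] y_def[symmetric]
    using d dg dh d3 hg y_hd by simp
qed

lemma twisted_C5:
  assumes g: "g \<in> carrier G" and h: "h \<in> carrier G"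
    and c1: "g \<otimes> h = \<phi> h \<otimes> g" and c2: "\<phi> h \<otimes> g = \<phi> g \<otimes> \<phi> h"
    and c3: "h \<otimes> \<phi> g = g \<otimes> \<phi> h"
  shows "twisted_by (\<phi> h \<otimes> inv h) h g"
proof -
  define x y where "x = \<phi> g" and "y = \<phi> h"
  define d where "d = y \<otimes> inv h"
  have x: "x \<in> carrier G" and y: "y \<in> carrier G" and d: "d \<in> carrier G"
    using g h by (auto simp: x_def y_def d_def)
  have gh: "g \<otimes> h = y \<otimes> g" and yg: "y \<otimes> g = x \<otimes> y" and hx: "h \<otimes> x = g \<otimes> y"
    using c1 c2 c3 by (simp_all add: x_def y_def)
  have yx: "y \<otimes> x = h \<otimes> g"
    using arg_cong[OF trans[OF gh yg], of \<phi>] g h by (simp add: phi_mult x_def y_def)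
  have E1: "y \<otimes> y = h \<otimes> h \<otimes> inv y \<otimes> h"
  proof -
    have "y \<otimes> y \<otimes> g = y \<otimes> x \<otimes> y"
      using x y g by (simp add: m_assoc yg)
    also have "\<dots> = h \<otimes> (g \<otimes> y)"
      using g h y by (simp add: yx m_assoc)
    also have "\<dots> = h \<otimes> h \<otimes> inv y \<otimes> h \<otimes> g"
      using x y g h by (simp add: m_assoc flip: hx yx)
    finally show ?thesis using x y g h by simp
  qed
  have E2: "h \<otimes> h = y \<otimes> inv h \<otimes> y \<otimes> y"
    using arg_cong[OF E1, of \<phi>] h y by (simp add: phi_mult phi_inv y_def m_assoc)
  have hy: "h \<otimes> y = y \<otimes> h"
  proof -
    have "y \<otimes> y = y \<otimes> inv h \<otimes> y \<otimes> h"
      using E1 E2 h y by (simp add: m_assoc)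
    then have "h \<otimes> y = h \<otimes> (inv h \<otimes> y \<otimes> h)"
      using h y by (simp add: m_assoc)
    then show ?thesis using h y by (simp add: m_assoc)
  qed
  have y3: "y [^] (3::nat) = h [^] (3::nat)"
  proof -
    have "y \<otimes> y \<otimes> y = h \<otimes> h \<otimes> inv y \<otimes> (y \<otimes> h)"
      using E1 h y by (simp add: m_assoc hy)
    then show ?thesis
      using h y by (simp add: numeral_3_eq_3 m_assoc)
  qed
  have dh_y: "d \<otimes> h = y"
    using h y by (simp add: d_def m_assoc)
  have dh: "d \<otimes> h = h \<otimes> d"
  proof -
    have "h \<otimes> d = y"
      using h y by (simp add: d_def hy flip: m_assoc) (simp add: m_assoc)
    then show ?thesis using dh_y by simp
  qed
  have d3: "d [^] (3::nat) = \<one>"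
    using y3 pow_mult_distrib[OF dh d h, of 3] dh_y d h by simp
  have dx_g: "d \<otimes> x = g"
  proof -
    have "h \<otimes> (d \<otimes> x) = h \<otimes> g"
      using d h x by (simp add: dh_y yx flip: m_assoc dh)
    then show ?thesis using d h x g by simp
  qed
  have x_ddg: "x = d \<otimes> d \<otimes> g"
  proof -
    have "d \<otimes> d \<otimes> g = d [^] (3::nat) \<otimes> x"
      using d x by (simp add: numeral_3_eq_3 m_assoc flip: dx_g)
    then show ?thesis using d3 x by simp
  qed
  have dg: "d \<otimes> g = g \<otimes> d"
  proof -
    have "d \<otimes> g \<otimes> h = d \<otimes> (d \<otimes> h \<otimes> g)"
      using d g h by (simp add: m_assoc gh flip: dh_y)
    also have "\<dots> = h \<otimes> x"
      using d g h by (simp add: x_ddg m_assoc mult_assoc_subst[OF dh[symmetric]])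
    also have "\<dots> = g \<otimes> d \<otimes> h"
      using d g h by (simp add: hx m_assoc flip: dh_y)
    finally show ?thesis using d g h by simp
  qed
  have "x = inv d \<otimes> g"
    using dx_g d x by (metis inv_cancel_left)
  then show ?thesis
    unfolding twisted_by_def d_def[symmetric] x_def[symmetric] y_def[symmetric]
    using d dg dh d3 gh dh_y by simp
qed

end

locale skew_balanced = invol_group +
  assumes balanced: "\<lbrakk>a \<in> carrier G; b \<in> carrier G; z \<in> carrier G\<rbrakk> \<Longrightarrow>
    count {#a \<otimes> b, \<phi> a \<otimes> \<phi> b, b \<otimes> \<phi> a, \<phi> b \<otimes> a#} z mod 3
      = count {#b \<otimes> a, \<phi> b \<otimes> \<phi> a, a \<otimes> \<phi> b, \<phi> a \<otimes> b#} z mod 3"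
begin

lemma twisted_C3:
  assumes g: "g \<in> carrier G" and h: "h \<in> carrier G" and ng: "\<phi> g \<noteq> g"
    and nc: "g \<otimes> h \<noteq> h \<otimes> g" and fix_gh: "\<phi> (g \<otimes> h) = g \<otimes> h"
    and c1: "h \<otimes> g = \<phi> g \<otimes> h" and c2: "\<phi> g \<otimes> h = g \<otimes> \<phi> h"
  shows "twisted_by (\<phi> g \<otimes> inv g) g h"
proof -
  define x y where "x = \<phi> g" and "y = \<phi> h"
  define d where "d = x \<otimes> inv g"
  have x: "x \<in> carrier G" and y: "y \<in> carrier G" and d: "d \<in> carrier G"
    using g h by (auto simp: x_def y_def d_def)
  have yx: "y \<otimes> x = g \<otimes> h"
    using fix_gh g h by (simp add: phi_mult x_def y_def)
  have xh: "x \<otimes> h = h \<otimes> g" and gy: "g \<otimes> y = h \<otimes> g"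
    using c1 c2 by (simp_all add: x_def y_def)
  have hx_ne: "h \<otimes> x \<noteq> h \<otimes> g"
    using ng g h x by (simp add: x_def)
  \<comment> \<open>the balance condition for (g, h) at hg, gh and xy forces xy = hx = yg\<close>
  have "x \<otimes> y = h \<otimes> x \<and> y \<otimes> g = h \<otimes> x"
    using balanced[OF g h, of "h \<otimes> g"] balanced[OF g h, of "g \<otimes> h"]
      balanced[OF g h, of "x \<otimes> y"] g h x y nc hx_ne
    by (auto simp: x_def[symmetric] y_def[symmetric] yx gy xh split: if_splits)
  then have xy: "x \<otimes> y = h \<otimes> x" and yg: "y \<otimes> g = h \<otimes> x" by auto
  have dg_x: "d \<otimes> g = x"
    using g x by (simp add: d_def m_assoc)
  have hg: "h \<otimes> g = d \<otimes> g \<otimes> h"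
    using xh dg_x by simp
  have dh: "d \<otimes> h = h \<otimes> d"
  proof -
    have "d \<otimes> h \<otimes> g = d \<otimes> g \<otimes> y"
      using gy d g h y by (simp add: m_assoc)
    also have "\<dots> = h \<otimes> d \<otimes> g"
      using xy dg_x d g h by (simp add: m_assoc)
    finally show ?thesis using d g h by simp
  qed
  have y_hd: "y = h \<otimes> d"
  proof -
    have "y \<otimes> g = h \<otimes> d \<otimes> g"
      using yg dg_x d g h by (simp add: m_assoc)
    then show ?thesis using d g h y by simp
  qed
  have dg: "d \<otimes> g = g \<otimes> d"
  proof -
    have "d \<otimes> g \<otimes> h = g \<otimes> d \<otimes> h"
      using xh gy y_hd dh dg_x d g h by (simp add: m_assoc)
    then show ?thesis using d g h by simp
  qed
  have d3: "d [^] (3::nat) = \<one>"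
  proof -
    have "y \<otimes> x = d \<otimes> d \<otimes> (h \<otimes> g)"
      using y_hd dg_x dh d g h by (metis m_assoc m_closed)
    also have "\<dots> = d [^] (3::nat) \<otimes> (g \<otimes> h)"
      using hg d g h by (simp add: numeral_3_eq_3 m_assoc)
    finally show ?thesis using yx d g h by simp
  qed
  show ?thesis
    unfolding twisted_by_def d_def[symmetric] x_def[symmetric] y_def[symmetric]
    using d dg dh d3 hg dg_x y_hd by simp
qed

lemma square_fixed_C1:
  assumes g: "g \<in> carrier G" and h: "h \<in> carrier G" and nh: "\<phi> h \<noteq> h"
    and fix_gh: "\<phi> (g \<otimes> h) = g \<otimes> h" and fix_hg: "\<phi> (h \<otimes> g) = h \<otimes> g"
    and c1: "h \<otimes> \<phi> g = g \<otimes> \<phi> h" and c2: "\<phi> h \<otimes> g = \<phi> g \<otimes> h"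
  shows "\<phi> g \<otimes> \<phi> g = g \<otimes> g"
proof (cases "\<phi> (g \<otimes> g) = g \<otimes> g")
  case True
  then show ?thesis using g by (simp add: phi_mult)
next
  case False
  define x y where "x = \<phi> g" and "y = \<phi> h"
  have x: "x \<in> carrier G" and y: "y \<in> carrier G"
    using g h by (auto simp: x_def y_def)
  have yx: "y \<otimes> x = g \<otimes> h" and xy: "x \<otimes> y = h \<otimes> g"
    using fix_gh fix_hg g h by (simp_all add: phi_mult x_def y_def)
  have hx: "h \<otimes> x = g \<otimes> y" and yg: "y \<otimes> g = x \<otimes> h"
    using c1 c2 by (simp_all add: x_def y_def)
  \<comment> \<open>the four products occurring in the balance condition for the pair (g^2, h)\<close>
  have xh: "x \<otimes> h = y \<otimes> g"
    using yg by simp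
  have "h \<otimes> (x \<otimes> x) = g \<otimes> g \<otimes> h"
    using g h x y by (simp add: m_assoc yx mult_assoc_subst[OF hx])
  moreover have "x \<otimes> x \<otimes> h = h \<otimes> (g \<otimes> g)"
    using g h x y by (simp add: m_assoc xh mult_assoc_subst[OF xy])
  moreover have "x \<otimes> x \<otimes> y = y \<otimes> (g \<otimes> g)"
    using g h x y by (simp add: m_assoc xy mult_assoc_subst[OF xh])
  moreover have "y \<otimes> (x \<otimes> x) = g \<otimes> g \<otimes> y"
    using g h x y by (simp add: m_assoc hx mult_assoc_subst[OF yx])
  ultimately have "g \<otimes> g \<otimes> h = h \<otimes> (g \<otimes> g)"
    using balanced[of "g \<otimes> g" h "g \<otimes> g \<otimes> h"] g h y nh False
    by (auto simp: phi_mult x_def[symmetric] y_def[symmetric] split: if_splits)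
  then have "h \<otimes> (x \<otimes> x) = h \<otimes> (g \<otimes> g)"
    using \<open>h \<otimes> (x \<otimes> x) = g \<otimes> g \<otimes> h\<close> by simp
  then show ?thesis
    using g h x by (simp add: x_def)
qed

text \<open>Under (C2) (only the first and last relation are needed) the square of g is phi-fixed.\<close>
lemma square_fixed_C2:
  assumes g: "g \<in> carrier G" and h: "h \<in> carrier G"
    and ng: "\<phi> g \<noteq> g" and nh: "\<phi> h \<noteq> h" and nc: "g \<otimes> h \<noteq> h \<otimes> g"
    and fix_gh: "\<phi> (g \<otimes> h) = g \<otimes> h" and c: "h \<otimes> \<phi> g = \<phi> g \<otimes> h"
  shows "\<phi> g \<otimes> \<phi> g = g \<otimes> g"
proof -
  define x y where "x = \<phi> g" and "y = \<phi> h"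
  have x: "x \<in> carrier G" and y: "y \<in> carrier G"
    using g h by (auto simp: x_def y_def)
  have yx: "y \<otimes> x = g \<otimes> h"
    using fix_gh g h by (simp add: phi_mult x_def y_def)
  have hx: "h \<otimes> x = x \<otimes> h"
    using c by (simp add: x_def)
  have gy: "g \<otimes> y = y \<otimes> g"
    using arg_cong[OF hx, of \<phi>] g h by (simp add: phi_mult x_def y_def)
  \<comment> \<open>the balance condition for the pair (g^-1, h) at the point g^-1 h\<close>
  have "h \<otimes> inv x = inv x \<otimes> h" "y \<otimes> inv g = inv g \<otimes> y"
    using commutes_inv[OF h x hx] commutes_inv[OF y g gy[symmetric]] by simp_all
  moreover have "h \<otimes> inv g \<noteq> inv g \<otimes> h"
    using nc g h by (metis commutes_inv inv_closed inv_inv)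
  moreover have "inv g \<otimes> y \<noteq> inv g \<otimes> h" "inv x \<otimes> h \<noteq> inv g \<otimes> h"
    using g h x y ng nh inv_inj by (simp_all add: x_def y_def inj_on_eq_iff)
  ultimately have "y \<otimes> inv x = inv g \<otimes> h"
    using balanced[of "inv g" h "inv g \<otimes> h"] g h
    by (auto simp: phi_inv x_def[symmetric] y_def[symmetric] split: if_splits)
  then have gy_hx: "g \<otimes> y = h \<otimes> x"
    using g h x y by (metis inv_solve_left inv_solve_right m_assoc m_closed inv_closed)
  have "x \<otimes> x \<otimes> h = g \<otimes> g \<otimes> h"
    using g h x y
    by (simp add: m_assoc hx[symmetric] mult_assoc_subst[OF hx[symmetric]] yx
        mult_assoc_subst[OF gy_hx[symmetric]])
  then show ?thesis
    using g h x by (simp add: x_def)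
qed

lemma cubes_not_fixed_C1_C2:
  assumes g: "g \<in> carrier G" and h: "h \<in> carrier G"
    and ng: "\<phi> g \<noteq> g" and nh: "\<phi> h \<noteq> h" and nc: "g \<otimes> h \<noteq> h \<otimes> g"
    and cases: "(\<phi> (g \<otimes> h) = g \<otimes> h \<and> \<phi> (h \<otimes> g) = h \<otimes> g \<and>
                  h \<otimes> \<phi> g = g \<otimes> \<phi> h \<and> \<phi> h \<otimes> g = \<phi> g \<otimes> h)
             \<or> (\<phi> (g \<otimes> h) = g \<otimes> h \<and> \<phi> (h \<otimes> g) = h \<otimes> g \<and> h \<otimes> \<phi> g = \<phi> g \<otimes> h)"
  shows "\<phi> (g [^] (3::nat)) \<noteq> g [^] (3::nat) \<and> \<phi> (h [^] (3::nat)) \<noteq> h [^] (3::nat)"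
proof -
  have "\<phi> g \<otimes> \<phi> g = g \<otimes> g \<and> \<phi> h \<otimes> \<phi> h = h \<otimes> h"
    using cases
  proof
    assume "\<phi> (g \<otimes> h) = g \<otimes> h \<and> \<phi> (h \<otimes> g) = h \<otimes> g \<and>
      h \<otimes> \<phi> g = g \<otimes> \<phi> h \<and> \<phi> h \<otimes> g = \<phi> g \<otimes> h"
    then show ?thesis
      using square_fixed_C1[OF g h nh] square_fixed_C1[OF h g ng] by simp
  next
    assume C2: "\<phi> (g \<otimes> h) = g \<otimes> h \<and> \<phi> (h \<otimes> g) = h \<otimes> g \<and> h \<otimes> \<phi> g = \<phi> g \<otimes> h"
    then have "\<phi> (h \<otimes> \<phi> g) = \<phi> (\<phi> g \<otimes> h)"
      by simp
    then have "g \<otimes> \<phi> h = \<phi> h \<otimes> g"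
      using g h by (simp add: phi_mult)
    then show ?thesis
      using C2 square_fixed_C2[OF g h ng nh nc] square_fixed_C2[OF h g nh ng nc[symmetric]] by simp
  qed
  then show ?thesis
    using cube_not_fixed g h ng nh by blast
qed

lemma twisted_C3_to_C6:
  assumes g: "g \<in> carrier G" and h: "h \<in> carrier G"
    and ng: "\<phi> g \<noteq> g" and nh: "\<phi> h \<noteq> h" and nc: "g \<otimes> h \<noteq> h \<otimes> g"
    and cases:
      "(\<phi> (g \<otimes> h) = g \<otimes> h \<and> h \<otimes> g = \<phi> g \<otimes> h \<and> \<phi> g \<otimes> h = g \<otimes> \<phi> h)
     \<or> (g \<otimes> h = h \<otimes> \<phi> g \<and> h \<otimes> \<phi> g = \<phi> g \<otimes> \<phi> h \<and> \<phi> h \<otimes> g = \<phi> g \<otimes> h)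
     \<or> (g \<otimes> h = \<phi> h \<otimes> g \<and> \<phi> h \<otimes> g = \<phi> g \<otimes> \<phi> h \<and> h \<otimes> \<phi> g = g \<otimes> \<phi> h)
     \<or> (\<phi> (h \<otimes> g) = h \<otimes> g \<and> g \<otimes> h = \<phi> h \<otimes> g \<and> \<phi> h \<otimes> g = h \<otimes> \<phi> g)"
  shows "\<exists>d. twisted_by d g h"
  using cases
proof (elim disjE conjE)
  assume "\<phi> (g \<otimes> h) = g \<otimes> h" "h \<otimes> g = \<phi> g \<otimes> h" "\<phi> g \<otimes> h = g \<otimes> \<phi> h"
  then show ?thesis using twisted_C3[OF g h ng nc] by blast
next
  assume "g \<otimes> h = h \<otimes> \<phi> g" "h \<otimes> \<phi> g = \<phi> g \<otimes> \<phi> h" "\<phi> h \<otimes> g = \<phi> g \<otimes> h"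
  then show ?thesis using twisted_C4[OF g h] by blast
next
  assume "g \<otimes> h = \<phi> h \<otimes> g" "\<phi> h \<otimes> g = \<phi> g \<otimes> \<phi> h" "h \<otimes> \<phi> g = g \<otimes> \<phi> h"
  then show ?thesis using twisted_by_swap[OF h g twisted_C5[OF g h]] by blast
next
  assume "\<phi> (h \<otimes> g) = h \<otimes> g" "g \<otimes> h = \<phi> h \<otimes> g" "\<phi> h \<otimes> g = h \<otimes> \<phi> g"
  then show ?thesis using twisted_by_swap[OF h g twisted_C3[OF h g nh nc[symmetric]]] by blast
qed

end

theorem lemma3p4:
  fixes G (structure) and \<phi> :: "'g \<Rightarrow> 'g" and g h :: 'g
  assumes "group G"
    and "CHAR('r::comm_ring_1) = 3"
    and "group_involution G \<phi>"
    and "skew_commutative G \<phi> TYPE('r)"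
    and "g \<in> carrier G" and "h \<in> carrier G"
    and "g \<notin> fixed_elems G \<phi>" and "h \<notin> fixed_elems G \<phi>"
    and "g \<otimes> h \<noteq> h \<otimes> g"
  shows
   "((g \<otimes> h \<in> fixed_elems G \<phi> \<and> h \<otimes> g \<in> fixed_elems G \<phi> \<and>
        h \<otimes> \<phi> g = g \<otimes> \<phi> h \<and> \<phi> h \<otimes> g = \<phi> g \<otimes> h)
     \<or> (g \<otimes> h \<in> fixed_elems G \<phi> \<and> h \<otimes> g \<in> fixed_elems G \<phi> \<and>
        h \<otimes> \<phi> g = \<phi> g \<otimes> h)
     \<longrightarrow> g [^] (3::nat) \<notin> fixed_elems G \<phi> \<and> h [^] (3::nat) \<notin> fixed_elems G \<phi>)
    \<and>
    ((g \<otimes> h \<in> fixed_elems G \<phi> \<and> h \<otimes> g = \<phi> g \<otimes> h \<and> \<phi> g \<otimes> h = g \<otimes> \<phi> h)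
     \<or> (g \<otimes> h = h \<otimes> \<phi> g \<and> h \<otimes> \<phi> g = \<phi> g \<otimes> \<phi> h \<and> \<phi> h \<otimes> g = \<phi> g \<otimes> h)
     \<or> (g \<otimes> h = \<phi> h \<otimes> g \<and> \<phi> h \<otimes> g = \<phi> g \<otimes> \<phi> h \<and> h \<otimes> \<phi> g = g \<otimes> \<phi> h)
     \<or> (h \<otimes> g \<in> fixed_elems G \<phi> \<and> g \<otimes> h = \<phi> h \<otimes> g \<and> \<phi> h \<otimes> g = h \<otimes> \<phi> g)
     \<longrightarrow> g [^] (3::nat) \<in> fixed_elems G \<phi> \<and> h [^] (3::nat) \<in> fixed_elems G \<phi> \<and>
         (\<forall>x \<in> generate G {g, h, \<phi> g, \<phi> h}.
            g [^] (3::nat) \<otimes> x = x \<otimes> g [^] (3::nat) \<and>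
            h [^] (3::nat) \<otimes> x = x \<otimes> h [^] (3::nat)))"
proof -
  have "invol_group G \<phi>"
    using assms(1,3) by (simp add: invol_group_def invol_group_axioms_def)
  then interpret skew_balanced G \<phi>
    using invol_group.skew_commutative_count[OF _ assms(4,2)]
    by (simp add: skew_balanced_def skew_balanced_axioms_def)
  have g: "g \<in> carrier G" and h: "h \<in> carrier G"
    and ng: "\<phi> g \<noteq> g" and nh: "\<phi> h \<noteq> h" and nc: "g \<otimes> h \<noteq> h \<otimes> g"
    using assms(5-9) by (auto simp: fixed_elems_def)
  show ?thesis
    using cubes_not_fixed_C1_C2[OF g h ng nh nc] twisted_C3_to_C6[OF g h ng nh nc]
      twisted_by_cubes[OF g h] g h
    by (auto simp: fixed_elems_def)
qed

end
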